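(* Let $G$ be a countable infinite discrete group and $\alpha: G\curvearrowright X$ a continuous action on an infinite compact Hausdorff space $X$ with weak paradoxical comparison. Let $F\subset X$ be closed and $O\subset X$ open, and suppose that for every closed $G$-invariant subset $Y\subset X$, $F\cap Y\neq\emptyset$ implies $O\cap Y\neq\emptyset$. Then $F\prec O$.
   Context: Subequivalence: for closed $F$ and open $O$, $F\prec O$ if there exist a finite open cover $\mathcal{U}$ of $F$ and $s_U\in G$ with the sets $s_UU$ pairwise disjoint subsets of $O$. Weak paradoxical comparison: for every closed $F$ and nonempty open $O$ with $F\subset G\cdot O=\bigcup_{g\in G}gO$, one has $F\prec O$. *)

theory Defs
  imports "HOL-Analysis.Analysis" "HOL-Algebra.Group"
begin

definition continuous_action :: "('g, 'b) monoid_scheme \<Rightarrow> ('g \<Rightarrow> 'x::topological_space \<Rightarrow> 'x) \<Rightarrow> bool" where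
  "continuous_action G act \<longleftrightarrow> group G
     \<and> (\<forall>g\<in>carrier G. continuous_on UNIV (act g))
     \<and> act \<one>\<^bsub>G\<^esub> = id
     \<and> (\<forall>g\<in>carrier G. \<forall>h\<in>carrier G. act (g \<otimes>\<^bsub>G\<^esub> h) = act g \<circ> act h)"

definition subequiv :: "('g, 'b) monoid_scheme \<Rightarrow> ('g \<Rightarrow> 'x::topological_space \<Rightarrow> 'x) \<Rightarrow> 'x set \<Rightarrow> 'x set \<Rightarrow> bool" where
  "subequiv G act F V0 \<longleftrightarrow>
     (\<exists>UU s. finite UU \<and> (\<forall>U\<in>UU. open U) \<and> F \<subseteq> \<Union>UU
        \<and> (\<forall>U\<in>UU. s U \<in> carrier G \<and> act (s U) ` U \<subseteq> V0)
        \<and> (\<forall>U\<in>UU. \<forall>V\<in>UU. U \<noteq> V \<longrightarrow> act (s U) ` U \<inter> act (s V) ` V = {}))"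

definition orbit_set :: "('g, 'b) monoid_scheme \<Rightarrow> ('g \<Rightarrow> 'x \<Rightarrow> 'x) \<Rightarrow> 'x set \<Rightarrow> 'x set" where
  "orbit_set G act V0 = (\<Union>g\<in>carrier G. act g ` V0)"

definition weak_paradoxical_comparison :: "('g, 'b) monoid_scheme \<Rightarrow> ('g \<Rightarrow> 'x::topological_space \<Rightarrow> 'x) \<Rightarrow> bool" where
  "weak_paradoxical_comparison G act \<longleftrightarrow>
     (\<forall>F V0. closed F \<and> open V0 \<and> V0 \<noteq> {} \<and> F \<subseteq> orbit_set G act V0 \<longrightarrow> subequiv G act F V0)"

definition invariant_set :: "('g, 'b) monoid_scheme \<Rightarrow> ('g \<Rightarrow> 'x \<Rightarrow> 'x) \<Rightarrow> 'x set \<Rightarrow> bool" where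
  "invariant_set G act Y \<longleftrightarrow> (\<forall>g\<in>carrier G. act g ` Y \<subseteq> Y)"

end

theory Submission
  imports Defs
begin

text \<open>The complement of the orbit G\<cdot>O is closed (each g O is open) and invariant, and it
  misses O; by hypothesis it then misses F, i.e. F \<subseteq> G\<cdot>O, and weak paradoxical
  comparison gives F \<prec> O (if O is empty, so is F).\<close>

lemma continuous_action_group: "continuous_action G act \<Longrightarrow> group G"
  by (simp add: continuous_action_def)

lemma continuous_action_one_apply: "continuous_action G act \<Longrightarrow> act \<one>\<^bsub>G\<^esub> x = x"
  by (simp add: continuous_action_def)

lemma continuous_action_mult_apply:
  "continuous_action G act \<Longrightarrow> g \<in> carrier G \<Longrightarrow> h \<in> carrier G
    \<Longrightarrow> act (g \<otimes>\<^bsub>G\<^esub> h) x = act g (act h x)"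
  by (simp add: continuous_action_def)

lemma continuous_action_inv_left:
  assumes "continuous_action G act" and "g \<in> carrier G"
  shows "act (inv\<^bsub>G\<^esub> g) (act g x) = x"
proof -
  interpret group G by (rule continuous_action_group[OF assms(1)])
  have "act (inv\<^bsub>G\<^esub> g) (act g x) = act (inv\<^bsub>G\<^esub> g \<otimes>\<^bsub>G\<^esub> g) x"
    using continuous_action_mult_apply[OF assms(1) inv_closed[OF assms(2)] assms(2)] by (rule sym)
  also have "\<dots> = x" using assms by (simp add: continuous_action_one_apply)
  finally show ?thesis .
qed

lemma continuous_action_image_eq_vimage:
  assumes "continuous_action G act" and "g \<in> carrier G"
  shows "act g ` U = act (inv\<^bsub>G\<^esub> g) -` U"
proof -
  interpret group G by (rule continuous_action_group[OF assms(1)])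
  have inv_right: "act g (act (inv\<^bsub>G\<^esub> g) y) = y" for y
    using continuous_action_inv_left[OF assms(1) inv_closed[OF assms(2)]] assms(2) by simp
  show ?thesis
  proof
    show "act g ` U \<subseteq> act (inv\<^bsub>G\<^esub> g) -` U"
      using continuous_action_inv_left[OF assms] by auto
    show "act (inv\<^bsub>G\<^esub> g) -` U \<subseteq> act g ` U"
      using inv_right by (metis image_eqI subsetI vimageD)
  qed
qed

lemma open_image_continuous_action:
  assumes "continuous_action G act" and "g \<in> carrier G" and "open U"
  shows "open (act g ` U)"
proof -
  interpret group G by (rule continuous_action_group[OF assms(1)])
  have "continuous_on UNIV (act (inv\<^bsub>G\<^esub> g))"
    using assms(1,2) by (simp add: continuous_action_def)
  then show ?thesis
    using assms by (simp add: continuous_action_image_eq_vimage open_vimage)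
qed

lemma open_orbit_set:
  assumes "continuous_action G act" and "open U"
  shows "open (orbit_set G act U)"
  unfolding orbit_set_def
  by (intro open_UN ballI open_image_continuous_action[OF assms(1) _ assms(2)])

lemma subset_orbit_set:
  assumes "continuous_action G act"
  shows "U \<subseteq> orbit_set G act U"
proof
  fix x assume "x \<in> U"
  then have "x \<in> act \<one>\<^bsub>G\<^esub> ` U" by (simp add: continuous_action_one_apply[OF assms])
  moreover have "\<one>\<^bsub>G\<^esub> \<in> carrier G"
    by (simp add: group.is_monoid monoid.one_closed continuous_action_group[OF assms])
  ultimately show "x \<in> orbit_set G act U" unfolding orbit_set_def by blast
qed

lemma invariant_set_Compl_orbit_set:
  assumes "continuous_action G act"
  shows "invariant_set G act (- orbit_set G act U)"
  unfolding invariant_set_def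
proof (intro ballI subsetI)
  interpret group G by (rule continuous_action_group[OF assms])
  fix g y assume g: "g \<in> carrier G" and "y \<in> act g ` (- orbit_set G act U)"
  then obtain x where x: "x \<notin> orbit_set G act U" and y: "y = act g x" by auto
  show "y \<in> - orbit_set G act U"
  proof
    assume "y \<in> orbit_set G act U"
    then obtain h z where h: "h \<in> carrier G" and z: "z \<in> U" and yz: "y = act h z"
      unfolding orbit_set_def by auto
    have "x = act (inv\<^bsub>G\<^esub> g) (act h z)"
      using continuous_action_inv_left[OF assms g] y yz by simp
    also have "\<dots> = act (inv\<^bsub>G\<^esub> g \<otimes>\<^bsub>G\<^esub> h) z"
      using assms g h by (simp add: continuous_action_mult_apply)
    finally have "x \<in> orbit_set G act U"
      using g h z unfolding orbit_set_def by blast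
    with x show False ..
  qed
qed

lemma subset_orbit_set_if_invariant_sets_meet:
  assumes "continuous_action G act" and "open Op"
    and "\<And>Y. closed Y \<Longrightarrow> invariant_set G act Y \<Longrightarrow> F \<inter> Y \<noteq> {} \<Longrightarrow> Op \<inter> Y \<noteq> {}"
  shows "F \<subseteq> orbit_set G act Op"
proof -
  let ?Y = "- orbit_set G act Op"
  have "closed ?Y" using open_orbit_set[OF assms(1,2)] by (simp add: closed_Compl)
  moreover have "Op \<inter> ?Y = {}" using subset_orbit_set[OF assms(1)] by blast
  ultimately have "F \<inter> ?Y = {}"
    using assms(3) invariant_set_Compl_orbit_set[OF assms(1)] by blast
  then show ?thesis by blast
qed

lemma subequiv_empty: "subequiv G act {} V"
  unfolding subequiv_def by (rule exI[of _ "{}"]) simp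

theorem lemma4p10:
  fixes G :: "('g, 'b) monoid_scheme"
    and act :: "'g \<Rightarrow> 'x::t2_space \<Rightarrow> 'x"
    and F Op :: "'x set"
  assumes "continuous_action G act"
    and "countable (carrier G)" and "infinite (carrier G)"
    and "compact (UNIV :: 'x set)" and "infinite (UNIV :: 'x set)"
    and "weak_paradoxical_comparison G act"
    and "closed F" and "open Op"
    and "\<And>Y. closed Y \<Longrightarrow> invariant_set G act Y \<Longrightarrow> F \<inter> Y \<noteq> {} \<Longrightarrow> Op \<inter> Y \<noteq> {}"
  shows "subequiv G act F Op"
proof -
  have F_orbit: "F \<subseteq> orbit_set G act Op"
    using subset_orbit_set_if_invariant_sets_meet[OF assms(1,8,9)] .
  show ?thesis
  proof (cases "Op = {}")
    case True
    with F_orbit have "F = {}" by (simp add: orbit_set_def)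
    then show ?thesis by (simp add: subequiv_empty)
  next
    case False
    then show ?thesis
      using assms(6-8) F_orbit by (simp add: weak_paradoxical_comparison_def)
  qed
qed

end
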